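(* Let $\nu>0$, $L>0$, $T>0$, and let $u(x,t)$ and $f(x,t)$ be smooth vector fields on $\mathbb{R}^3\times[0,T]$, periodic of period $L$ in each coordinate direction ($u$ need not be divergence-free). Let $\Gamma=\partial_t+u\cdot\nabla-\nu\Delta$, acting componentwise. Let $\ell$ be a smooth $L$-periodic vector field solving $$(\partial_t+u\cdot\nabla-\nu\Delta)\ell+u=0,$$ put $A=x+\ell$, let $(\nabla A)_{mj}=\partial_jA^m$, assume $\nabla A$ is invertible everywhere, let $Q=(\nabla A)^{-1}$ and $C_{m,k;i}=Q_{ji}\partial_j\partial_kA^m$. Let $v$ be a smooth $L$-periodic vector field solving $$\Gamma v_i=2\nu\, C_{m,k;i}\,\partial_k v_m+Q_{ji}f_j,\qquad i=1,2,3.$$ Define $w_i=(\partial_iA^m)v_m$. Then $$\Gamma w+(\nabla u)^*w=f,$$ i.e. $\Gamma w_i+(\partial_i u_j)w_j=f_i$ for $i=1,2,3$.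
   Context: Repeated indices are summed over $\{1,2,3\}$. $(\nabla u)^*$ denotes the transpose of the matrix $(\nabla u)_{jk}=\partial_k u_j$. *)

theory Defs
  imports "HOL-Analysis.Analysis"
begin

text \<open>C-infinity: differentiable everywhere, and every directional derivative is again C-infinity.\<close>
coinductive smooth_fun :: "('a::real_normed_vector \<Rightarrow> 'b::real_normed_vector) \<Rightarrow> bool" where
  "(\<forall>p. g differentiable at p) \<Longrightarrow> (\<forall>h. smooth_fun (\<lambda>p. frechet_derivative g (at p) h))
     \<Longrightarrow> smooth_fun g"

definition smooth_field :: "(real^3 \<Rightarrow> real \<Rightarrow> 'b::real_normed_vector) \<Rightarrow> bool" where
  "smooth_field g \<longleftrightarrow> smooth_fun (\<lambda>p::(real^3) \<times> real. g (fst p) (snd p))"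

definition periodic_field :: "real \<Rightarrow> (real^3 \<Rightarrow> real \<Rightarrow> 'b) \<Rightarrow> bool" where
  "periodic_field L g \<longleftrightarrow> (\<forall>j x t. g (x + L *\<^sub>R axis j 1) t = g x t)"

definition comp :: "(real^3 \<Rightarrow> real \<Rightarrow> real^3) \<Rightarrow> 3 \<Rightarrow> real^3 \<Rightarrow> real \<Rightarrow> real" where
  "comp g i = (\<lambda>x t. g x t $ i)"

definition pdx :: "3 \<Rightarrow> (real^3 \<Rightarrow> real \<Rightarrow> real) \<Rightarrow> real^3 \<Rightarrow> real \<Rightarrow> real" where
  "pdx j g = (\<lambda>x t. deriv (\<lambda>s. g (x + s *\<^sub>R axis j 1) t) 0)"

definition pdt :: "(real^3 \<Rightarrow> real \<Rightarrow> real) \<Rightarrow> real^3 \<Rightarrow> real \<Rightarrow> real" where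
  "pdt g = (\<lambda>x t. deriv (\<lambda>s. g x s) t)"

definition lap :: "(real^3 \<Rightarrow> real \<Rightarrow> real) \<Rightarrow> real^3 \<Rightarrow> real \<Rightarrow> real" where
  "lap g = (\<lambda>x t. \<Sum>j\<in>UNIV. pdx j (pdx j g) x t)"

definition Gam :: "real \<Rightarrow> (real^3 \<Rightarrow> real \<Rightarrow> real^3) \<Rightarrow> (real^3 \<Rightarrow> real \<Rightarrow> real) \<Rightarrow> real^3 \<Rightarrow> real \<Rightarrow> real" where
  "Gam \<nu> u g = (\<lambda>x t. pdt g x t + (\<Sum>j\<in>UNIV. u x t $ j * pdx j g x t) - \<nu> * lap g x t)"

definition Afield :: "(real^3 \<Rightarrow> real \<Rightarrow> real^3) \<Rightarrow> real^3 \<Rightarrow> real \<Rightarrow> real^3" where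
  "Afield ell = (\<lambda>x t. x + ell x t)"

definition gradA :: "(real^3 \<Rightarrow> real \<Rightarrow> real^3) \<Rightarrow> real^3 \<Rightarrow> real \<Rightarrow> real^3^3" where
  "gradA ell x t = (\<chi> m j. pdx j (comp (Afield ell) m) x t)"

definition Qm :: "(real^3 \<Rightarrow> real \<Rightarrow> real^3) \<Rightarrow> real^3 \<Rightarrow> real \<Rightarrow> real^3^3" where
  "Qm ell x t = matrix_inv (gradA ell x t)"

definition Cc :: "(real^3 \<Rightarrow> real \<Rightarrow> real^3) \<Rightarrow> 3 \<Rightarrow> 3 \<Rightarrow> 3 \<Rightarrow> real^3 \<Rightarrow> real \<Rightarrow> real" where
  "Cc ell m k i x t = (\<Sum>j\<in>UNIV. Qm ell x t $ j $ i * pdx j (pdx k (comp (Afield ell) m)) x t)"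

end

(*
  Since Gam A^m = Gam ell_m + u_m vanishes on the time slab, differentiating it in x_i and
  commuting d_i past Gam gives Gam (d_i A^m) = -(d_i u_j) d_j A^m. Expand
  Gam w_i = Gam ((d_i A^m) v_m) by the Leibniz rule
  Gam (f g) = (Gam f) g + f (Gam g) - 2 nu d_k f d_k g. The first term produces -(d_i u_j) w_j.
  Contracting the equation for v with d_i A^m and using Q (grad A) = I turns the second term
  into 2 nu (d_i d_k A^m) d_k v_m + f_i, whose first part cancels the third term by the
  symmetry of second derivatives. The identity is pointwise.
*)
theory Submission
  imports Defs
begin

definition dderiv :: "'a::real_normed_vector \<Rightarrow> ('a \<Rightarrow> 'b::real_normed_vector) \<Rightarrow> 'a \<Rightarrow> 'b" where
  "dderiv h G p = frechet_derivative G (at p) h"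

lemma smooth_fun_differentiable: "smooth_fun G \<Longrightarrow> G differentiable at p"
  by (erule smooth_fun.cases) auto

lemma smooth_fun_dderiv: "smooth_fun G \<Longrightarrow> smooth_fun (dderiv h G)"
  unfolding dderiv_def by (erule smooth_fun.cases) auto

lemma has_derivative_dderiv: "G differentiable at p \<Longrightarrow> (G has_derivative (\<lambda>h. dderiv h G p)) (at p)"
  unfolding dderiv_def using frechet_derivative_works by metis

lemma dderiv_eqI: "(G has_derivative G') (at p) \<Longrightarrow> dderiv h G p = G' h"
  unfolding dderiv_def using frechet_derivative_at by metis

lemma dderiv_const: "dderiv h (\<lambda>q. c) = (\<lambda>q. 0)"
  by (intro ext dderiv_eqI has_derivative_const)

lemma dderiv_linear: "bounded_linear f \<Longrightarrow> dderiv h f = (\<lambda>q. f h)"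
  by (intro ext dderiv_eqI bounded_linear_imp_has_derivative)

lemma dderiv_add:
  "(\<And>p. f differentiable at p) \<Longrightarrow> (\<And>p. g differentiable at p) \<Longrightarrow>
    dderiv h (\<lambda>q. f q + g q) = (\<lambda>q. dderiv h f q + dderiv h g q)"
  by (intro ext dderiv_eqI has_derivative_add has_derivative_dderiv)

lemma dderiv_diff:
  "(\<And>p. f differentiable at p) \<Longrightarrow> (\<And>p. g differentiable at p) \<Longrightarrow>
    dderiv h (\<lambda>q. f q - g q) = (\<lambda>q. dderiv h f q - dderiv h g q)"
  by (intro ext dderiv_eqI has_derivative_diff has_derivative_dderiv)

lemma dderiv_mult:
  fixes f g :: "'a::real_normed_vector \<Rightarrow> real"
  shows "(\<And>p. f differentiable at p) \<Longrightarrow> (\<And>p. g differentiable at p) \<Longrightarrow>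
    dderiv h (\<lambda>q. f q * g q) = (\<lambda>q. f q * dderiv h g q + dderiv h f q * g q)"
  by (intro ext dderiv_eqI has_derivative_mult has_derivative_dderiv)

lemma dderiv_sum:
  fixes f :: "'i \<Rightarrow> 'a::real_normed_vector \<Rightarrow> 'b::real_normed_vector"
  shows "finite I \<Longrightarrow> (\<And>i p. i \<in> I \<Longrightarrow> f i differentiable at p) \<Longrightarrow>
    dderiv h (\<lambda>q. \<Sum>i\<in>I. f i q) = (\<lambda>q. \<Sum>i\<in>I. dderiv h (f i) q)"
  by (intro ext dderiv_eqI has_derivative_sum has_derivative_dderiv) auto

text \<open>Closure of smoothness under the ring operations is proved by coinduction up to this
  inductively generated class: the derivative of a product is a sum of products again.\<close>

inductive smooth_generated :: "('a::real_normed_vector \<Rightarrow> real) \<Rightarrow> bool" where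
  smooth: "smooth_fun f \<Longrightarrow> smooth_generated f"
| linear: "bounded_linear f \<Longrightarrow> smooth_generated f"
| const: "smooth_generated (\<lambda>_. c)"
| add: "smooth_generated f \<Longrightarrow> smooth_generated g \<Longrightarrow> smooth_generated (\<lambda>x. f x + g x)"
| diff: "smooth_generated f \<Longrightarrow> smooth_generated g \<Longrightarrow> smooth_generated (\<lambda>x. f x - g x)"
| mult: "smooth_generated f \<Longrightarrow> smooth_generated g \<Longrightarrow> smooth_generated (\<lambda>x. f x * g x)"

lemma smooth_generated_dderiv:
  "smooth_generated f \<Longrightarrow> (\<forall>p. f differentiable at p) \<and> (\<forall>h. smooth_generated (dderiv h f))"
proof (induction rule: smooth_generated.induct)
  case (smooth f)
  then show ?case using smooth_fun_differentiable smooth_fun_dderiv smooth_generated.smooth by blast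
next
  case (linear f)
  then show ?case
    by (auto simp: dderiv_linear bounded_linear_imp_differentiable intro: smooth_generated.const)
next
  case const
  then show ?case by (auto simp: dderiv_const intro: smooth_generated.const)
next
  case (add f g)
  then show ?case by (auto simp: dderiv_add intro!: smooth_generated.add)
next
  case (diff f g)
  then show ?case by (auto simp: dderiv_diff intro!: smooth_generated.diff)
next
  case (mult f g)
  then show ?case by (auto simp: dderiv_mult intro!: smooth_generated.add smooth_generated.mult)
qed

lemma smooth_generated_imp_smooth_fun: "smooth_generated f \<Longrightarrow> smooth_fun f"
proof (coinduction arbitrary: f rule: smooth_fun.coinduct)
  case (smooth_fun f)
  then show ?case using smooth_generated_dderiv unfolding dderiv_def by blast
qed

lemma smooth_fun_const: "smooth_fun (\<lambda>x::'a::real_normed_vector. c::real)"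
  by (rule smooth_generated_imp_smooth_fun) (intro smooth_generated.const)

lemma smooth_fun_linear: "bounded_linear (f::'a::real_normed_vector \<Rightarrow> real) \<Longrightarrow> smooth_fun f"
  by (rule smooth_generated_imp_smooth_fun) (intro smooth_generated.linear)

lemma smooth_fun_add:
  "smooth_fun (f::'a::real_normed_vector \<Rightarrow> real) \<Longrightarrow> smooth_fun g \<Longrightarrow> smooth_fun (\<lambda>x. f x + g x)"
  by (rule smooth_generated_imp_smooth_fun) (intro smooth_generated.add smooth_generated.smooth)

lemma smooth_fun_diff:
  "smooth_fun (f::'a::real_normed_vector \<Rightarrow> real) \<Longrightarrow> smooth_fun g \<Longrightarrow> smooth_fun (\<lambda>x. f x - g x)"
  by (rule smooth_generated_imp_smooth_fun) (intro smooth_generated.diff smooth_generated.smooth)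

lemma smooth_fun_mult:
  "smooth_fun (f::'a::real_normed_vector \<Rightarrow> real) \<Longrightarrow> smooth_fun g \<Longrightarrow> smooth_fun (\<lambda>x. f x * g x)"
  by (rule smooth_generated_imp_smooth_fun) (intro smooth_generated.mult smooth_generated.smooth)

lemma smooth_fun_sum:
  fixes f :: "'i \<Rightarrow> 'a::real_normed_vector \<Rightarrow> real"
  shows "(\<And>i. i \<in> I \<Longrightarrow> smooth_fun (f i)) \<Longrightarrow> smooth_fun (\<lambda>x. \<Sum>i\<in>I. f i x)"
proof (induction I rule: infinite_finite_induct)
  case (infinite I)
  then show ?case using smooth_fun_const[of 0] by simp
next
  case empty
  then show ?case using smooth_fun_const[of 0] by simp
next
  case (insert i I)
  then have "smooth_fun (\<lambda>x. f i x + (\<Sum>i\<in>I. f i x))"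
    by (intro smooth_fun_add) auto
  with insert.hyps show ?case by simp
qed

lemmas smooth_fun_intros =
  smooth_fun_const smooth_fun_add smooth_fun_diff smooth_fun_mult smooth_fun_sum smooth_fun_dderiv

lemma smooth_fun_bounded_linear_comp:
  assumes "smooth_fun G" "bounded_linear L"
  shows "smooth_fun (\<lambda>p. L (G p))"
  using assms
proof (coinduction arbitrary: G rule: smooth_fun.coinduct)
  case (smooth_fun G)
  have deriv: "((\<lambda>p. L (G p)) has_derivative (\<lambda>h. L (dderiv h G p))) (at p)" for p
    using bounded_linear.has_derivative[OF smooth_fun(2)
        has_derivative_dderiv[OF smooth_fun_differentiable[OF smooth_fun(1)]]] .
  then have "(\<lambda>p. frechet_derivative (\<lambda>p. L (G p)) (at p) h) = (\<lambda>p. L (dderiv h G p))" for h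
    by (intro ext) (metis dderiv_eqI dderiv_def)
  moreover have "(\<lambda>p. L (G p)) differentiable at p" for p
    using deriv by (rule differentiableI)
  ultimately show ?case
    using smooth_fun(2) smooth_fun_dderiv[OF smooth_fun(1)]
    by (intro exI[of _ "\<lambda>p. L (G p)"] conjI refl allI disjI1) auto
qed

lemma dderiv_scaleR:
  assumes "G differentiable at p"
  shows "dderiv (c *\<^sub>R h) G p = c *\<^sub>R dderiv h G p"
  using linear_scale[OF linear_frechet_derivative[OF assms]] unfolding dderiv_def .

lemma has_real_derivative_dderiv_line:
  fixes G :: "'a::real_normed_vector \<Rightarrow> real"
  assumes "G differentiable at (p + s *\<^sub>R h)"
  shows "((\<lambda>s. G (p + s *\<^sub>R h)) has_real_derivative dderiv h G (p + s *\<^sub>R h)) (at s)"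
proof -
  have "((\<lambda>s. p + s *\<^sub>R h) has_derivative (\<lambda>c. c *\<^sub>R h)) (at s)"
    by (auto intro!: derivative_eq_intros)
  from diff_chain_at[OF this has_derivative_dderiv[OF assms]]
  have "((\<lambda>s. G (p + s *\<^sub>R h)) has_derivative (\<lambda>c. dderiv (c *\<^sub>R h) G (p + s *\<^sub>R h))) (at s)"
    by (simp add: o_def)
  then show ?thesis
    using dderiv_scaleR[OF assms]
    by (simp add: has_field_derivative_def mult.commute[of _ "dderiv h G _"])
qed

lemma dderiv_eq_0_if_vanishes_on_line:
  fixes H :: "'a::real_normed_vector \<Rightarrow> real"
  assumes "H differentiable at p" "\<And>s. H (p + s *\<^sub>R h) = 0"
  shows "dderiv h H p = 0"
proof -
  have "((\<lambda>s. H (p + s *\<^sub>R h)) has_real_derivative dderiv h H p) (at 0)"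
    using has_real_derivative_dderiv_line[of H p 0 h] assms(1) by simp
  moreover have "((\<lambda>s. H (p + s *\<^sub>R h)) has_real_derivative 0) (at 0)"
    using assms(2) by simp
  ultimately show ?thesis using DERIV_unique by blast
qed

lemma second_difference_mean_value:
  fixes G :: "'a::real_normed_vector \<Rightarrow> real"
  assumes G: "smooth_fun G" and e: "e > 0"
  shows "\<exists>q. norm (q - p) \<le> e * (norm h + norm k) \<and>
     G (p + e *\<^sub>R h + e *\<^sub>R k) - G (p + e *\<^sub>R h) - G (p + e *\<^sub>R k) + G p
       = e * e * dderiv k (dderiv h G) q"
proof -
  define \<alpha> where "\<alpha> s = G ((p + e *\<^sub>R k) + s *\<^sub>R h) - G (p + s *\<^sub>R h)" for s
  have "(\<alpha> has_real_derivative
      (dderiv h G ((p + e *\<^sub>R k) + s *\<^sub>R h) - dderiv h G (p + s *\<^sub>R h))) (at s)" for s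
    unfolding \<alpha>_def
    by (intro DERIV_diff has_real_derivative_dderiv_line smooth_fun_differentiable[OF G])
  from MVT2[OF e this] obtain \<sigma> where \<sigma>: "0 < \<sigma>" "\<sigma> < e" and
    \<alpha>_diff: "\<alpha> e - \<alpha> 0 = e * (dderiv h G ((p + e *\<^sub>R k) + \<sigma> *\<^sub>R h) - dderiv h G (p + \<sigma> *\<^sub>R h))"
    by auto
  define \<beta> where "\<beta> r = dderiv h G ((p + \<sigma> *\<^sub>R h) + r *\<^sub>R k)" for r
  have "(\<beta> has_real_derivative dderiv k (dderiv h G) ((p + \<sigma> *\<^sub>R h) + r *\<^sub>R k)) (at r)" for r
    unfolding \<beta>_def
    by (intro has_real_derivative_dderiv_line smooth_fun_differentiable smooth_fun_dderiv G)
  from MVT2[OF e this] obtain \<rho> where \<rho>: "0 < \<rho>" "\<rho> < e" and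
    \<beta>_diff: "\<beta> e - \<beta> 0 = e * dderiv k (dderiv h G) ((p + \<sigma> *\<^sub>R h) + \<rho> *\<^sub>R k)"
    by auto
  define q where "q = (p + \<sigma> *\<^sub>R h) + \<rho> *\<^sub>R k"
  have "norm (q - p) \<le> norm (\<sigma> *\<^sub>R h) + norm (\<rho> *\<^sub>R k)"
    unfolding q_def by (metis add_diff_cancel_left' add.assoc norm_triangle_ineq)
  also have "\<dots> \<le> e * norm h + e * norm k"
    using \<sigma> \<rho> by (intro add_mono) (auto intro!: mult_right_mono)
  finally have "norm (q - p) \<le> e * (norm h + norm k)"
    by (simp add: distrib_left)
  moreover have "G (p + e *\<^sub>R h + e *\<^sub>R k) - G (p + e *\<^sub>R h) - G (p + e *\<^sub>R k) + G p
      = \<alpha> e - \<alpha> 0"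
    unfolding \<alpha>_def by (simp add: algebra_simps)
  moreover have "\<alpha> e - \<alpha> 0 = e * (\<beta> e - \<beta> 0)"
    using \<alpha>_diff unfolding \<beta>_def by (simp add: algebra_simps)
  ultimately show ?thesis
    using \<beta>_diff unfolding q_def by (metis mult.assoc)
qed

text \<open>Schwarz's theorem: the second difference quotient, expanded by the mean value theorem
  in either order, is close to both mixed derivatives.\<close>

lemma dderiv_commute:
  fixes G :: "'a::real_normed_vector \<Rightarrow> real"
  assumes G: "smooth_fun G"
  shows "dderiv h (dderiv k G) = dderiv k (dderiv h G)"
proof (rule ext, rule ccontr)
  fix p
  define a where "a = dderiv k (dderiv h G) p"
  define b where "b = dderiv h (dderiv k G) p"
  define \<epsilon> where "\<epsilon> = \<bar>a - b\<bar> / 2"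
  assume "b \<noteq> a"
  then have \<epsilon>: "\<epsilon> > 0" unfolding \<epsilon>_def by simp
  have "isCont (dderiv k (dderiv h G)) p" "isCont (dderiv h (dderiv k G)) p"
    by (intro differentiable_imp_continuous_within smooth_fun_differentiable smooth_fun_dderiv G)+
  then obtain d1 d2 where d: "d1 > 0" "d2 > 0"
    and near_a: "\<And>y. dist y p < d1 \<Longrightarrow> dist (dderiv k (dderiv h G) y) a < \<epsilon>"
    and near_b: "\<And>y. dist y p < d2 \<Longrightarrow> dist (dderiv h (dderiv k G) y) b < \<epsilon>"
    using \<epsilon> unfolding continuous_at_eps_delta a_def b_def by blast
  define e where "e = min d1 d2 / (2 * (norm h + norm k + 1))"
  have norms: "norm h + norm k + 1 > 0"
    by (simp add: add_nonneg_pos)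
  then have e: "e > 0"
    using d unfolding e_def by simp
  have "e * (norm h + norm k) \<le> e * (norm h + norm k + 1)"
    using e by simp
  also have "\<dots> = min d1 d2 / 2"
    using norms unfolding e_def by (simp add: field_simps)
  finally have small: "e * (norm h + norm k) < min d1 d2"
    using d by linarith
  obtain q1 where q1: "norm (q1 - p) \<le> e * (norm h + norm k)"
    "G (p + e *\<^sub>R h + e *\<^sub>R k) - G (p + e *\<^sub>R h) - G (p + e *\<^sub>R k) + G p
       = e * e * dderiv k (dderiv h G) q1"
    using second_difference_mean_value[OF G e] by blast
  obtain q2 where q2: "norm (q2 - p) \<le> e * (norm k + norm h)"
    "G (p + e *\<^sub>R k + e *\<^sub>R h) - G (p + e *\<^sub>R k) - G (p + e *\<^sub>R h) + G p
       = e * e * dderiv h (dderiv k G) q2"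
    using second_difference_mean_value[OF G e] by blast
  have "dderiv k (dderiv h G) q1 = dderiv h (dderiv k G) q2"
    using q1(2) q2(2) e by (simp add: algebra_simps)
  moreover have "dist q1 p < d1" "dist q2 p < d2"
    using q1(1) q2(1) small by (auto simp: dist_norm add.commute)
  ultimately have "dist a b < 2 * \<epsilon>"
    using near_a near_b dist_triangle3[of a b "dderiv h (dderiv k G) q2"] by fastforce
  then show False
    unfolding \<epsilon>_def dist_real_def by simp
qed

type_synonym spacetime = "(real^3) \<times> real"

definition space_dir :: "3 \<Rightarrow> spacetime" where
  "space_dir j = (axis j 1, 0)"

definition time_dir :: "spacetime" where
  "time_dir = (0, 1)"

abbreviation dx :: "3 \<Rightarrow> (spacetime \<Rightarrow> real) \<Rightarrow> spacetime \<Rightarrow> real" where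
  "dx j \<equiv> dderiv (space_dir j)"

abbreviation dt :: "(spacetime \<Rightarrow> real) \<Rightarrow> spacetime \<Rightarrow> real" where
  "dt \<equiv> dderiv time_dir"

lemma pdx_eq_dderiv:
  assumes "case_prod g differentiable at (x, t)"
  shows "pdx j g x t = dx j (case_prod g) (x, t)"
proof -
  have "((\<lambda>s. g (x + s *\<^sub>R axis j 1) t) has_real_derivative dx j (case_prod g) (x, t)) (at 0)"
    using has_real_derivative_dderiv_line[of "case_prod g" "(x, t)" 0 "space_dir j"] assms
    by (simp add: space_dir_def)
  then show ?thesis
    unfolding pdx_def by (rule DERIV_imp_deriv)
qed

lemma pdt_eq_dderiv:
  assumes "case_prod g differentiable at (x, t)"
  shows "pdt g x t = dt (case_prod g) (x, t)"
proof -
  have "((\<lambda>s. g x s) has_real_derivative dt (case_prod g) (x, t)) (at t)"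
    using has_real_derivative_dderiv_line[of "case_prod g" "(x, 0)" t time_dir] assms
    by (simp add: time_dir_def)
  then show ?thesis
    unfolding pdt_def by (rule DERIV_imp_deriv)
qed

lemma case_prod_pdx:
  "smooth_fun (case_prod g) \<Longrightarrow> case_prod (pdx j g) = dx j (case_prod g)"
  by (auto simp: fun_eq_iff pdx_eq_dderiv smooth_fun_differentiable)

lemma pdx_pdx_eq_dderiv:
  assumes "smooth_fun (case_prod g)"
  shows "pdx j (pdx k g) x t = dx j (dx k (case_prod g)) (x, t)"
  using assms pdx_eq_dderiv[of "pdx k g"]
  by (simp add: case_prod_pdx smooth_fun_differentiable smooth_fun_dderiv)

lemma smooth_field_component: "smooth_field g \<Longrightarrow> smooth_fun (case_prod (comp g j))"
  using smooth_fun_bounded_linear_comp[OF _ bounded_linear_vec_nth, of "\<lambda>p. g (fst p) (snd p)" j]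
  by (simp add: smooth_field_def comp_def case_prod_beta')

definition advdiff ::
  "real \<Rightarrow> (3 \<Rightarrow> spacetime \<Rightarrow> real) \<Rightarrow> (spacetime \<Rightarrow> real) \<Rightarrow> spacetime \<Rightarrow> real" where
  "advdiff \<nu> U H = (\<lambda>q. dt H q + (\<Sum>j\<in>UNIV. U j q * dx j H q)
     - \<nu> * (\<Sum>j\<in>UNIV. dx j (dx j H) q))"

lemma Gam_eq_advdiff:
  assumes "smooth_fun (case_prod g)"
  shows "Gam \<nu> u g x t = advdiff \<nu> (\<lambda>j. case_prod (comp u j)) (case_prod g) (x, t)"
  using assms
  by (simp add: Gam_def advdiff_def lap_def comp_def pdt_eq_dderiv pdx_eq_dderiv
      pdx_pdx_eq_dderiv smooth_fun_differentiable)

lemma smooth_fun_advdiff: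
  "(\<And>j. smooth_fun (U j)) \<Longrightarrow> smooth_fun H \<Longrightarrow> smooth_fun (advdiff \<nu> U H)"
  unfolding advdiff_def by (intro smooth_fun_intros) auto

lemmas dderiv_rules = dderiv_const dderiv_add dderiv_diff dderiv_mult dderiv_sum

lemma dderiv_advdiff:
  assumes U: "\<And>j. smooth_fun (U j)" and H: "smooth_fun H"
  shows "dderiv h (advdiff \<nu> U H) =
    (\<lambda>q. advdiff \<nu> U (dderiv h H) q + (\<Sum>j\<in>UNIV. dderiv h (U j) q * dx j H q))"
proof -
  have "dderiv h (dderiv k H) = dderiv k (dderiv h H)"
    and "dderiv h (dderiv k (dderiv k H)) = dderiv k (dderiv k (dderiv h H))" for k
    using H by (simp_all add: dderiv_commute smooth_fun_dderiv)
  then show ?thesis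
    using U H unfolding advdiff_def
    by (simp add: dderiv_rules smooth_fun_differentiable smooth_fun_intros sum.distrib algebra_simps)
qed

lemma advdiff_mult:
  assumes "\<And>j. smooth_fun (U j)" "smooth_fun F" "smooth_fun G"
  shows "advdiff \<nu> U (\<lambda>q. F q * G q) p = advdiff \<nu> U F p * G p + F p * advdiff \<nu> U G p
     - 2 * \<nu> * (\<Sum>k\<in>UNIV. dx k F p * dx k G p)"
  using assms unfolding advdiff_def
  by (simp add: dderiv_rules smooth_fun_differentiable smooth_fun_intros sum.distrib
      sum_distrib_left algebra_simps)

lemma advdiff_sum:
  assumes "\<And>j. smooth_fun (U j)" "finite I" "\<And>i. i \<in> I \<Longrightarrow> smooth_fun (F i)"
  shows "advdiff \<nu> U (\<lambda>q. \<Sum>i\<in>I. F i q) p = (\<Sum>i\<in>I. advdiff \<nu> U (F i) p)"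
  using assms unfolding advdiff_def
  by (simp add: dderiv_rules smooth_fun_differentiable smooth_fun_intros sum.distrib
      sum_distrib_left sum_subtractf sum.swap[of _ UNIV I] algebra_simps)

lemma bounded_linear_space_coordinate: "bounded_linear (\<lambda>q::spacetime. fst q $ m)"
  using bounded_linear_compose[OF bounded_linear_vec_nth bounded_linear_fst] .

lemma advdiff_coordinate_add:
  assumes "smooth_fun H"
  shows "advdiff \<nu> U (\<lambda>q. fst q $ m + H q) p = advdiff \<nu> U H p + U m p"
proof -
  note coord = bounded_linear_space_coordinate[of m]
  have "(\<Sum>j\<in>UNIV. U j p * fst (space_dir j) $ m) = U m p"
    by (simp add: space_dir_def axis_def if_distrib[of "(*) _"] cong: if_cong)
  then show ?thesis
    using assms unfolding advdiff_def
    by (simp add: dderiv_rules dderiv_linear[OF coord] smooth_fun_differentiable smooth_fun_intros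
        smooth_fun_linear[OF coord] bounded_linear_imp_differentiable[OF coord]
        time_dir_def sum.distrib distrib_left)
qed

lemma advdiff_dx_of_solution:
  assumes U: "\<And>j. smooth_fun (U j)" and a: "smooth_fun a"
    and a_eq: "\<And>q. snd q \<in> S \<Longrightarrow> advdiff \<nu> U a q = 0" and p: "snd p \<in> S"
  shows "advdiff \<nu> U (dx i a) p = - (\<Sum>j\<in>UNIV. dx i (U j) p * dx j a p)"
proof -
  have "advdiff \<nu> U a (p + s *\<^sub>R space_dir i) = 0" for s
    using p by (intro a_eq) (simp add: space_dir_def)
  then have "dx i (advdiff \<nu> U a) p = 0"
    by (intro dderiv_eq_0_if_vanishes_on_line smooth_fun_differentiable smooth_fun_advdiff U a)
  then show ?thesis
    using dderiv_advdiff[OF U a] by (simp add: eq_neg_iff_add_eq_0)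
qed

lemma matrix_inv_left: "invertible A \<Longrightarrow> matrix_inv A ** A = mat 1"
  unfolding matrix_inv_def invertible_def by (rule someI2_ex) auto

lemma left_inverse_transpose_contract:
  fixes M Q :: "'a::comm_semiring_1^'n^'n"
  assumes "Q ** M = mat 1"
  shows "(\<Sum>m\<in>UNIV. M $ m $ i * (\<Sum>j\<in>UNIV. Q $ j $ m * y j)) = y i"
proof -
  have "(\<Sum>m\<in>UNIV. M $ m $ i * (\<Sum>j\<in>UNIV. Q $ j $ m * y j))
      = (\<Sum>m\<in>UNIV. \<Sum>j\<in>UNIV. Q $ j $ m * M $ m $ i * y j)"
    by (simp add: sum_distrib_left ac_simps)
  also have "\<dots> = (\<Sum>j\<in>UNIV. \<Sum>m\<in>UNIV. Q $ j $ m * M $ m $ i * y j)"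
    by (rule sum.swap)
  also have "\<dots> = (\<Sum>j\<in>UNIV. (Q ** M) $ j $ i * y j)"
    by (simp add: matrix_matrix_mult_def sum_distrib_right)
  also have "\<dots> = y i"
    using assms by (simp add: mat_def if_distrib[of "\<lambda>c. c * _"] cong: if_cong)
  finally show ?thesis .
qed

lemma sum_sum_sum_factor_out:
  "(\<Sum>n\<in>N. \<Sum>k\<in>K. (\<Sum>j\<in>J. c j * z j k n) * y k n) = (\<Sum>j\<in>J. c j * (\<Sum>n\<in>N. \<Sum>k\<in>K. z j k n * y k n))"
  for c :: "'j \<Rightarrow> 'a::comm_semiring_0"
proof -
  have "(\<Sum>n\<in>N. \<Sum>k\<in>K. (\<Sum>j\<in>J. c j * z j k n) * y k n) = (\<Sum>n\<in>N. \<Sum>k\<in>K. \<Sum>j\<in>J. c j * (z j k n * y k n))"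
    by (simp add: sum_distrib_right mult.assoc)
  also have "\<dots> = (\<Sum>n\<in>N. \<Sum>j\<in>J. \<Sum>k\<in>K. c j * (z j k n * y k n))"
    by (rule sum.cong[OF refl], rule sum.swap)
  also have "\<dots> = (\<Sum>j\<in>J. \<Sum>n\<in>N. \<Sum>k\<in>K. c j * (z j k n * y k n))"
    by (rule sum.swap)
  also have "\<dots> = (\<Sum>j\<in>J. c j * (\<Sum>n\<in>N. \<Sum>k\<in>K. z j k n * y k n))"
    by (simp add: sum_distrib_left)
  finally show ?thesis .
qed

lemma advdiff_pullback:
  fixes U a V :: "3 \<Rightarrow> spacetime \<Rightarrow> real" and F :: "3 \<Rightarrow> real" and Q :: "real^3^3"
  assumes U: "\<And>j. smooth_fun (U j)" and a: "\<And>m. smooth_fun (a m)" and V: "\<And>m. smooth_fun (V m)"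
    and a_eq: "\<And>m q. snd q \<in> S \<Longrightarrow> advdiff \<nu> U (a m) q = 0" and p: "snd p \<in> S"
    and Q: "Q ** (\<chi> m j. dx j (a m) p) = mat 1"
    and V_eq: "\<And>m. advdiff \<nu> U (V m) p =
       2 * \<nu> * (\<Sum>n\<in>UNIV. \<Sum>k\<in>UNIV. (\<Sum>j\<in>UNIV. Q $ j $ m * dx j (dx k (a n)) p) * dx k (V n) p)
       + (\<Sum>j\<in>UNIV. Q $ j $ m * F j)"
  shows "advdiff \<nu> U (\<lambda>q. \<Sum>m\<in>UNIV. dx i (a m) q * V m q) p
    + (\<Sum>j\<in>UNIV. dx i (U j) p * (\<Sum>m\<in>UNIV. dx j (a m) p * V m p)) = F i"
proof -
  define cross where "cross j = (\<Sum>n\<in>UNIV. \<Sum>k\<in>UNIV. dx j (dx k (a n)) p * dx k (V n) p)" for j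
  have "advdiff \<nu> U (V m) p = (\<Sum>j\<in>UNIV. Q $ j $ m * (2 * \<nu> * cross j + F j))" for m
    unfolding V_eq cross_def sum_sum_sum_factor_out
    by (simp add: sum.distrib sum_distrib_left algebra_simps)
  then have contracted: "(\<Sum>m\<in>UNIV. dx i (a m) p * advdiff \<nu> U (V m) p) = 2 * \<nu> * cross i + F i"
    using left_inverse_transpose_contract[OF Q] by simp
  have "(\<Sum>m\<in>UNIV. advdiff \<nu> U (dx i (a m)) p * V m p)
      = - (\<Sum>m\<in>UNIV. \<Sum>j\<in>UNIV. dx i (U j) p * (dx j (a m) p * V m p))"
    by (simp add: advdiff_dx_of_solution[OF U a a_eq p] sum_distrib_right sum_negf mult.assoc)
  also have "\<dots> = - (\<Sum>j\<in>UNIV. dx i (U j) p * (\<Sum>m\<in>UNIV. dx j (a m) p * V m p))"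
    by (subst sum.swap) (simp add: sum_distrib_left)
  finally have transported: "(\<Sum>m\<in>UNIV. advdiff \<nu> U (dx i (a m)) p * V m p)
      = - (\<Sum>j\<in>UNIV. dx i (U j) p * (\<Sum>m\<in>UNIV. dx j (a m) p * V m p))" .
  have "(\<Sum>m\<in>UNIV. \<Sum>k\<in>UNIV. dx k (dx i (a m)) p * dx k (V m) p) = cross i"
    unfolding cross_def by (simp add: dderiv_commute[OF a])
  moreover have "advdiff \<nu> U (\<lambda>q. \<Sum>m\<in>UNIV. dx i (a m) q * V m q) p
     = (\<Sum>m\<in>UNIV. advdiff \<nu> U (dx i (a m)) p * V m p)
       + (\<Sum>m\<in>UNIV. dx i (a m) p * advdiff \<nu> U (V m) p)
       - 2 * \<nu> * (\<Sum>m\<in>UNIV. \<Sum>k\<in>UNIV. dx k (dx i (a m)) p * dx k (V m) p)"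
    by (simp add: advdiff_sum advdiff_mult U a V smooth_fun_intros sum.distrib sum_subtractf
        sum_distrib_left)
  ultimately show ?thesis
    using contracted transported by simp
qed

lemma case_prod_comp_Afield:
  "case_prod (comp (Afield ell) m) = (\<lambda>q. fst q $ m + case_prod (comp ell m) q)"
  by (simp add: fun_eq_iff Afield_def comp_def)

lemma smooth_fun_Afield_component:
  "smooth_field ell \<Longrightarrow> smooth_fun (case_prod (comp (Afield ell) m))"
  unfolding case_prod_comp_Afield
  by (intro smooth_fun_add smooth_fun_linear bounded_linear_space_coordinate smooth_field_component)

lemma advdiff_Afield:
  assumes "smooth_field ell"
  shows "advdiff \<nu> (\<lambda>j. case_prod (comp u j)) (case_prod (comp (Afield ell) m)) (x, t)
    = Gam \<nu> u (comp ell m) x t + u x t $ m"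
  using assms
  by (simp add: case_prod_comp_Afield advdiff_coordinate_add smooth_field_component
      Gam_eq_advdiff[symmetric]) (simp add: comp_def)

lemma gradA_eq_dderiv:
  "smooth_field ell \<Longrightarrow> gradA ell x t = (\<chi> m j. dx j (case_prod (comp (Afield ell) m)) (x, t))"
  by (simp add: gradA_def pdx_eq_dderiv smooth_fun_differentiable smooth_fun_Afield_component)

lemma Cc_eq_dderiv:
  "smooth_field ell \<Longrightarrow> Cc ell m k i x t =
    (\<Sum>j\<in>UNIV. Qm ell x t $ j $ i * dx j (dx k (case_prod (comp (Afield ell) m))) (x, t))"
  by (simp add: Cc_def pdx_pdx_eq_dderiv smooth_fun_Afield_component)

theorem proposition3:
  fixes \<nu> L T :: real and u f ell v w :: "real^3 \<Rightarrow> real \<Rightarrow> real^3"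
  assumes "\<nu> > 0" "L > 0" "T > 0"
    and "smooth_field u" "smooth_field f" "smooth_field ell" "smooth_field v"
    and "periodic_field L u" "periodic_field L f" "periodic_field L ell" "periodic_field L v"
    and ell_eq: "\<And>x t i. t \<in> {0..T} \<Longrightarrow> Gam \<nu> u (comp ell i) x t + u x t $ i = 0"
    and inv: "\<And>x t. t \<in> {0..T} \<Longrightarrow> invertible (gradA ell x t)"
    and v_eq: "\<And>x t i. t \<in> {0..T} \<Longrightarrow>
       Gam \<nu> u (comp v i) x t =
         2 * \<nu> * (\<Sum>m\<in>UNIV. \<Sum>k\<in>UNIV. Cc ell m k i x t * pdx k (comp v m) x t)
         + (\<Sum>j\<in>UNIV. Qm ell x t $ j $ i * f x t $ j)"
    and w_def: "\<And>x t i. w x t $ i = (\<Sum>m\<in>UNIV. pdx i (comp (Afield ell) m) x t * v x t $ m)"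
  shows "\<And>x t i. t \<in> {0..T} \<Longrightarrow>
     Gam \<nu> u (comp w i) x t + (\<Sum>j\<in>UNIV. pdx i (comp u j) x t * w x t $ j) = f x t $ i"
proof -
  fix x t i
  assume t: "t \<in> {0..T}"
  define U where "U = (\<lambda>j. case_prod (comp u j))"
  define a where "a = (\<lambda>m. case_prod (comp (Afield ell) m))"
  define V where "V = (\<lambda>m. case_prod (comp v m))"
  have smooth: "smooth_fun (U j)" "smooth_fun (a j)" "smooth_fun (V j)" for j
    using assms(4,6,7)
    by (simp_all add: U_def a_def V_def smooth_field_component smooth_fun_Afield_component)
  have w: "case_prod (comp w j) = (\<lambda>q. \<Sum>m\<in>UNIV. dx j (a m) q * V m q)" for j
    using smooth(2)
    by (auto simp: comp_def[of w] w_def a_def V_def comp_def[of v] pdx_eq_dderiv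
        smooth_fun_differentiable)
  have a_eq: "advdiff \<nu> U (a m) q = 0" if "snd q \<in> {0..T}" for m q
    using ell_eq[OF that] advdiff_Afield[OF assms(6), of \<nu> u m "fst q" "snd q"]
    unfolding a_def U_def by simp
  have Q: "Qm ell x t ** (\<chi> m j. dx j (a m) (x, t)) = mat 1"
    using matrix_inv_left[OF inv[where x=x, OF t]] assms(6)
    by (simp add: Qm_def gradA_eq_dderiv a_def)
  have V_eq: "advdiff \<nu> U (V m) (x, t) =
      2 * \<nu> * (\<Sum>n\<in>UNIV. \<Sum>k\<in>UNIV. (\<Sum>j\<in>UNIV. Qm ell x t $ j $ m * dx j (dx k (a n)) (x, t))
        * dx k (V n) (x, t))
      + (\<Sum>j\<in>UNIV. Qm ell x t $ j $ m * f x t $ j)" for m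
    using v_eq[OF t, of m] smooth(3) assms(6) unfolding U_def a_def V_def
    by (simp add: Gam_eq_advdiff Cc_eq_dderiv pdx_eq_dderiv smooth_fun_differentiable)
  have "advdiff \<nu> U (case_prod (comp w i)) (x, t)
      + (\<Sum>j\<in>UNIV. dx i (U j) (x, t) * case_prod (comp w j) (x, t)) = f x t $ i"
    unfolding w using advdiff_pullback[where S="{0..T}", OF smooth a_eq _ Q V_eq] t by simp
  moreover have "smooth_fun (case_prod (comp w i))"
    unfolding w by (simp add: smooth smooth_fun_intros)
  ultimately show "Gam \<nu> u (comp w i) x t + (\<Sum>j\<in>UNIV. pdx i (comp u j) x t * w x t $ j) = f x t $ i"
    using smooth(1) unfolding U_def
    by (simp add: Gam_eq_advdiff pdx_eq_dderiv smooth_fun_differentiable comp_def[of w])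
qed

end
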